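(* Let $\pi$ be a permutation-invariant probability density on $\mathbb{X}^n$ and $q$ a probability density on $\mathbb{X}$. For every $x\in\mathbb{X}^n$, $A^{\mathrm{SOMA}}(x)\ge A^{\mathrm{RAN}}(x)$, where $$A^{\mathrm{SOMA}}(x)=\int_{\mathbb{X}}q(y)\sum_{i=1}^n\frac{w_i(y,x)}{W(y,x)}\alpha_i^{\mathrm{SOMA}}(y,x)\,dy,\qquad A^{\mathrm{RAN}}(x)=\int_{\mathbb{X}}q(y)\sum_{i=1}^n\frac1n\alpha_i^{\mathrm{IMwG}}(y,x)\,dy.$$
   Context: Permutation invariance: $\pi(x_{\sigma(1)},\dots,x_{\sigma(n)})=\pi(x)$ for all permutations $\sigma$. $[x_{-i},y]$ is $x$ with its $i$-th component replaced by $y$. Weights: $w_i(y,x)=\pi([x_{-i},y])/\big(q(y)\prod_{j\ne i}q(x_j)\big)$ ($1\le i\le n$), $w_0(y,x)=\pi(x)/\prod_j q(x_j)$, $W=\sum_{i=1}^n w_i$ (well-defined, positive). $\alpha_i^{\mathrm{SOMA}}(y,x)=\min\{1,W/(W+w_0-w_i)\}$, $\alpha_i^{\mathrm{IMwG}}(y,x)=\min\{1,w_i/w_0\}$. $A^{\mathrm{SOMA}}(x)$ and $A^{\mathrm{RAN}}(x)$ are the probabilities of accepting a move from $x$ under the SOMA sampler and the random-scan independent-Metropolis-within-Gibbs sampler, respectively. *)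

theory Defs
  imports "HOL-Probability.Probability" "HOL-Combinatorics.Permutations"
begin

text \<open>Points of X^n are represented as extensional functions on the index set {..<n}
  (elements of the space of the product measure PiM {..<n} (\<lambda>_. M)).
  Indices are 0,...,n-1 instead of 1,...,n.\<close>

text \<open>Metropolis-Hastings style ratio min{1, a/b}, with the convention a/0 = +infinity,
  i.e. the ratio equals 1 when b = 0.\<close>
definition mh_min :: "real \<Rightarrow> real \<Rightarrow> real" where
  "mh_min a b = (if b = 0 then 1 else min 1 (a / b))"

definition perm_invariant :: "nat \<Rightarrow> 'a measure \<Rightarrow> ((nat \<Rightarrow> 'a) \<Rightarrow> real) \<Rightarrow> bool" where
  "perm_invariant n M \<pi> \<longleftrightarrow>
     (\<forall>\<sigma> x. \<sigma> permutes {..<n} \<longrightarrow> x \<in> space (PiM {..<n} (\<lambda>_. M)) \<longrightarrow>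
        \<pi> (\<lambda>i\<in>{..<n}. x (\<sigma> i)) = \<pi> x)"

definition wt :: "nat \<Rightarrow> ((nat \<Rightarrow> 'a) \<Rightarrow> real) \<Rightarrow> ('a \<Rightarrow> real) \<Rightarrow> nat \<Rightarrow> 'a \<Rightarrow> (nat \<Rightarrow> 'a) \<Rightarrow> real" where
  "wt n \<pi> q i y x = \<pi> (x(i := y)) / (q y * (\<Prod>j\<in>{..<n} - {i}. q (x j)))"

definition wt0 :: "nat \<Rightarrow> ((nat \<Rightarrow> 'a) \<Rightarrow> real) \<Rightarrow> ('a \<Rightarrow> real) \<Rightarrow> (nat \<Rightarrow> 'a) \<Rightarrow> real" where
  "wt0 n \<pi> q x = \<pi> x / (\<Prod>j\<in>{..<n}. q (x j))"

definition Wsum :: "nat \<Rightarrow> ((nat \<Rightarrow> 'a) \<Rightarrow> real) \<Rightarrow> ('a \<Rightarrow> real) \<Rightarrow> 'a \<Rightarrow> (nat \<Rightarrow> 'a) \<Rightarrow> real" where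
  "Wsum n \<pi> q y x = (\<Sum>i\<in>{..<n}. wt n \<pi> q i y x)"

definition alpha_SOMA :: "nat \<Rightarrow> ((nat \<Rightarrow> 'a) \<Rightarrow> real) \<Rightarrow> ('a \<Rightarrow> real) \<Rightarrow> nat \<Rightarrow> 'a \<Rightarrow> (nat \<Rightarrow> 'a) \<Rightarrow> real" where
  "alpha_SOMA n \<pi> q i y x =
     mh_min (Wsum n \<pi> q y x) (Wsum n \<pi> q y x + wt0 n \<pi> q x - wt n \<pi> q i y x)"

definition alpha_IMwG :: "nat \<Rightarrow> ((nat \<Rightarrow> 'a) \<Rightarrow> real) \<Rightarrow> ('a \<Rightarrow> real) \<Rightarrow> nat \<Rightarrow> 'a \<Rightarrow> (nat \<Rightarrow> 'a) \<Rightarrow> real" where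
  "alpha_IMwG n \<pi> q i y x = mh_min (wt n \<pi> q i y x) (wt0 n \<pi> q x)"

definition A_SOMA :: "nat \<Rightarrow> 'a measure \<Rightarrow> ((nat \<Rightarrow> 'a) \<Rightarrow> real) \<Rightarrow> ('a \<Rightarrow> real) \<Rightarrow> (nat \<Rightarrow> 'a) \<Rightarrow> real" where
  "A_SOMA n M \<pi> q x = (\<integral>y. q y * (\<Sum>i\<in>{..<n}.
       wt n \<pi> q i y x / Wsum n \<pi> q y x * alpha_SOMA n \<pi> q i y x) \<partial>M)"

definition A_RAN :: "nat \<Rightarrow> 'a measure \<Rightarrow> ((nat \<Rightarrow> 'a) \<Rightarrow> real) \<Rightarrow> ('a \<Rightarrow> real) \<Rightarrow> (nat \<Rightarrow> 'a) \<Rightarrow> real" where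
  "A_RAN n M \<pi> q x = (\<integral>y. q y * (\<Sum>i\<in>{..<n}. 1 / real n * alpha_IMwG n \<pi> q i y x) \<partial>M)"

end

(* For fixed x and proposal y write w_i = w_i(y,x), w_0 = w_0(x), W = sum_i w_i, and put
   m_i = max(w_i, w_0) and r_i = min(1, w_i/w_0), so that r_i m_i = w_i.  The SOMA integrand term
   (w_i/W) alpha_i^SOMA equals w_i / max(W, W + w_0 - w_i) >= w_i / sum_j m_j, while the random-scan
   integrand is (1/n) sum_i r_i.  Since r and m are both nondecreasing functions of w_i, Chebyshev's
   sum inequality gives (1/n) sum_i r_i <= sum_i r_i m_i / sum_j m_j = W / sum_j m_j.  So the
   integrands are ordered pointwise in y for arbitrary nonnegative weights; integrating against q
   finishes the proof. *)

theory Submission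
  imports Defs
begin

lemma Chebyshev_sum_similarly_ordered:
  fixes a b :: "'i \<Rightarrow> 'a::linordered_idom"
  assumes similar: "\<And>i j. i \<in> I \<Longrightarrow> j \<in> I \<Longrightarrow> 0 \<le> (a i - a j) * (b i - b j)"
  shows "(\<Sum>i\<in>I. a i) * (\<Sum>i\<in>I. b i) \<le> of_nat (card I) * (\<Sum>i\<in>I. a i * b i)"
proof -
  have "2 * (of_nat (card I) * (\<Sum>i\<in>I. a i * b i) - (\<Sum>i\<in>I. a i) * (\<Sum>i\<in>I. b i))
      = (\<Sum>i\<in>I. \<Sum>j\<in>I. (a i - a j) * (b i - b j))"
    by (simp only: one_add_one[symmetric] algebra_simps)
      (simp add: algebra_simps sum_subtractf sum.distrib sum.swap[of "\<lambda>i j. a i * b j"]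
        sum_distrib_left sum_distrib_right)
  also have "\<dots> \<ge> 0"
    by (intro sum_nonneg similar)
  finally show ?thesis
    by simp
qed

lemma mh_min_le_one: "mh_min a b \<le> 1"
  by (simp add: mh_min_def)

lemma mh_min_nonneg: "0 \<le> a \<Longrightarrow> 0 \<le> b \<Longrightarrow> 0 \<le> mh_min a b"
  by (simp add: mh_min_def)

lemma mh_min_mono: "0 \<le> b \<Longrightarrow> a \<le> a' \<Longrightarrow> mh_min a b \<le> mh_min a' b"
  by (auto simp: mh_min_def min_def divide_right_mono)

lemma mh_min_mult_max: "0 \<le> a \<Longrightarrow> 0 \<le> b \<Longrightarrow> mh_min a b * max a b = a"
  by (auto simp: mh_min_def min_def max_def)

lemma divide_mult_mh_min: "0 < W \<Longrightarrow> 0 \<le> c \<Longrightarrow> w / W * mh_min W c = w / max W c"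
  by (auto simp: mh_min_def min_def max_def)

lemma random_scan_acceptance_le_soma:
  fixes w :: "nat \<Rightarrow> real" and w0 :: real and n :: nat
  defines "W \<equiv> \<Sum>i<n. w i"
  assumes w_nonneg: "\<And>i. i < n \<Longrightarrow> 0 \<le> w i" and w0_nonneg: "0 \<le> w0" and W_pos: "0 < W"
  shows "(\<Sum>i<n. 1 / real n * mh_min (w i) w0) \<le> (\<Sum>i<n. w i / W * mh_min W (W + w0 - w i))"
proof -
  define m where "m i = max (w i) w0" for i
  define r where "r i = mh_min (w i) w0" for i
  define S where "S = (\<Sum>i<n. m i)"
  have n_pos: "0 < real n"
    using W_pos by (cases n) (auto simp: W_def)
  have rm: "r i * m i = w i" if "i < n" for i
    using mh_min_mult_max[OF w_nonneg[OF that] w0_nonneg] by (simp add: r_def m_def)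
  have "0 \<le> (r i - r j) * (m i - m j)" if "i < n" "j < n" for i j
  proof (cases "w i \<le> w j")
    case True
    then show ?thesis
      using mh_min_mono[OF w0_nonneg True] by (intro mult_nonpos_nonpos) (auto simp: r_def m_def)
  next
    case False
    then show ?thesis
      using mh_min_mono[OF w0_nonneg, of "w j" "w i"]
      by (intro mult_nonneg_nonneg) (auto simp: r_def m_def)
  qed
  then have "(\<Sum>i<n. r i) * S \<le> real n * W"
    using Chebyshev_sum_similarly_ordered[of "{..<n}" r m] by (simp add: S_def W_def rm)
  moreover have "W \<le> S"
    unfolding W_def S_def m_def by (intro sum_mono) simp
  ultimately have "(\<Sum>i<n. 1 / real n * r i) \<le> (\<Sum>i<n. w i / S)"
    using W_pos n_pos by (simp add: sum_divide_distrib[symmetric] field_simps W_def)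
  also have "\<dots> \<le> (\<Sum>i<n. w i / max W (W + w0 - w i))"
  proof (intro sum_mono divide_left_mono)
    fix i assume i: "i \<in> {..<n}"
    have "W + w0 - w i = (\<Sum>j\<in>{..<n} - {i}. w j) + w0"
      using i by (simp add: W_def sum_diff1)
    also have "\<dots> \<le> (\<Sum>j\<in>{..<n} - {i}. m j) + m i"
      by (intro add_mono sum_mono) (auto simp: m_def)
    also have "\<dots> = S"
      using i by (simp add: S_def sum_diff1)
    finally show "max W (W + w0 - w i) \<le> S"
      using \<open>W \<le> S\<close> by simp
  qed (use W_pos w_nonneg \<open>W \<le> S\<close> in \<open>auto intro!: mult_pos_pos\<close>)
  also have "\<dots> = (\<Sum>i<n. w i / W * mh_min W (W + w0 - w i))"
  proof (intro sum.cong refl divide_mult_mh_min[symmetric] W_pos)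
    fix i assume "i \<in> {..<n}"
    then have "w i \<le> W"
      unfolding W_def using w_nonneg by (intro member_le_sum) auto
    then show "0 \<le> W + w0 - w i"
      using w0_nonneg by simp
  qed
  finally show ?thesis
    by (simp add: r_def)
qed

lemma fun_upd_in_space_PiM:
  assumes "x \<in> space (PiM I M)" "i \<in> I" "y \<in> space (M i)"
  shows "x(i := y) \<in> space (PiM I M)"
  using assms by (auto simp: space_PiM PiE_iff extensional_def)

lemma measurable_fun_upd_PiM:
  assumes "x \<in> space (PiM I M)" "i \<in> I"
  shows "(\<lambda>y. x(i := y)) \<in> measurable (M i) (PiM I M)"
proof (rule measurable_PiM_single'[where f="\<lambda>j y. (x(i := y)) j"])
  fix j assume "j \<in> I"
  then have "x j \<in> space (M j)"
    using assms(1) by (auto simp: space_PiM)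
  then show "(\<lambda>y. (x(i := y)) j) \<in> measurable (M i) (M j)"
    by (cases "j = i") auto
qed (use assms in \<open>auto simp: space_PiM PiE_iff extensional_def\<close>)

lemma wt_nonneg:
  assumes "\<forall>x\<in>space (PiM {..<n} (\<lambda>_. M)). 0 \<le> \<pi> x" and "\<forall>y\<in>space M. 0 \<le> q y"
    and x: "x \<in> space (PiM {..<n} (\<lambda>_. M))" and "i < n" "y \<in> space M"
  shows "0 \<le> wt n \<pi> q i y x"
  using assms fun_upd_in_space_PiM[OF x, of i y] x
  unfolding wt_def
  by (auto intro!: divide_nonneg_nonneg mult_nonneg_nonneg prod_nonneg simp: space_PiM PiE_mem)

lemma wt0_nonneg:
  assumes "\<forall>x\<in>space (PiM {..<n} (\<lambda>_. M)). 0 \<le> \<pi> x" and "\<forall>y\<in>space M. 0 \<le> q y"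
    and "x \<in> space (PiM {..<n} (\<lambda>_. M))"
  shows "0 \<le> wt0 n \<pi> q x"
  using assms unfolding wt0_def by (auto intro!: divide_nonneg_nonneg prod_nonneg simp: space_PiM)

lemma borel_measurable_wt:
  assumes \<pi>: "\<pi> \<in> borel_measurable (PiM {..<n} (\<lambda>_. M))" and [measurable]: "q \<in> borel_measurable M"
    and x: "x \<in> space (PiM {..<n} (\<lambda>_. M))" and i: "i < n"
  shows "(\<lambda>y. wt n \<pi> q i y x) \<in> borel_measurable M"
proof -
  have [measurable]: "(\<lambda>y. \<pi> (x(i := y))) \<in> borel_measurable M"
    using measurable_comp[OF measurable_fun_upd_PiM[OF x] \<pi>] i by (simp add: comp_def)
  show ?thesis
    unfolding wt_def by measurable
qed

lemma borel_measurable_SOMA_integrand: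
  assumes \<pi>: "\<pi> \<in> borel_measurable (PiM {..<n} (\<lambda>_. M))" and q: "q \<in> borel_measurable M"
    and x: "x \<in> space (PiM {..<n} (\<lambda>_. M))"
  shows "(\<lambda>y. q y * (\<Sum>i<n. wt n \<pi> q i y x / Wsum n \<pi> q y x * alpha_SOMA n \<pi> q i y x))
    \<in> borel_measurable M"
proof -
  note wt = borel_measurable_wt[OF \<pi> q x]
  have [measurable]: "(\<lambda>y. Wsum n \<pi> q y x) \<in> borel_measurable M"
    unfolding Wsum_def using wt by (intro borel_measurable_sum) auto
  have [measurable]:
    "(\<lambda>y. \<Sum>i<n. wt n \<pi> q i y x / Wsum n \<pi> q y x * alpha_SOMA n \<pi> q i y x) \<in> borel_measurable M"
  proof (rule borel_measurable_sum)
    fix i assume "i \<in> {..<n}"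
    with wt have [measurable]: "(\<lambda>y. wt n \<pi> q i y x) \<in> borel_measurable M"
      by simp
    show "(\<lambda>y. wt n \<pi> q i y x / Wsum n \<pi> q y x * alpha_SOMA n \<pi> q i y x) \<in> borel_measurable M"
      unfolding alpha_SOMA_def mh_min_def by measurable
  qed
  show ?thesis
    using q by measurable
qed

lemma conditional_acceptance_ordered:
  assumes \<pi>: "\<forall>x\<in>space (PiM {..<n} (\<lambda>_. M)). 0 \<le> \<pi> x" and q: "\<forall>y\<in>space M. 0 \<le> q y"
    and x: "x \<in> space (PiM {..<n} (\<lambda>_. M))" and y: "y \<in> space M"
    and W_pos: "0 < Wsum n \<pi> q y x"
  shows "0 \<le> (\<Sum>i<n. 1 / real n * alpha_IMwG n \<pi> q i y x)"
    and "(\<Sum>i<n. 1 / real n * alpha_IMwG n \<pi> q i y x)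
      \<le> (\<Sum>i<n. wt n \<pi> q i y x / Wsum n \<pi> q y x * alpha_SOMA n \<pi> q i y x)"
    and "(\<Sum>i<n. wt n \<pi> q i y x / Wsum n \<pi> q y x * alpha_SOMA n \<pi> q i y x) \<le> 1"
proof -
  have wt: "0 \<le> wt n \<pi> q i y x" if "i < n" for i
    using wt_nonneg[OF \<pi> q x that y] .
  have wt0: "0 \<le> wt0 n \<pi> q x"
    using wt0_nonneg[OF \<pi> q x] .
  show "0 \<le> (\<Sum>i<n. 1 / real n * alpha_IMwG n \<pi> q i y x)"
    unfolding alpha_IMwG_def using wt wt0 by (auto intro!: sum_nonneg divide_nonneg_nonneg mh_min_nonneg)
  show "(\<Sum>i<n. 1 / real n * alpha_IMwG n \<pi> q i y x)
      \<le> (\<Sum>i<n. wt n \<pi> q i y x / Wsum n \<pi> q y x * alpha_SOMA n \<pi> q i y x)"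
    using random_scan_acceptance_le_soma[of n "\<lambda>i. wt n \<pi> q i y x" "wt0 n \<pi> q x"] wt wt0 W_pos
    unfolding alpha_IMwG_def alpha_SOMA_def Wsum_def by simp
  have "(\<Sum>i<n. wt n \<pi> q i y x / Wsum n \<pi> q y x * alpha_SOMA n \<pi> q i y x)
      \<le> (\<Sum>i<n. wt n \<pi> q i y x / Wsum n \<pi> q y x)"
    unfolding alpha_SOMA_def using wt W_pos
    by (intro sum_mono mult_left_le mh_min_le_one) auto
  also have "\<dots> = 1"
    using W_pos by (simp add: sum_divide_distrib[symmetric] Wsum_def)
  finally show "(\<Sum>i<n. wt n \<pi> q i y x / Wsum n \<pi> q y x * alpha_SOMA n \<pi> q i y x) \<le> 1" .
qed

theorem theorem4:
  fixes n :: nat and M :: "'a measure"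
    and \<pi> :: "(nat \<Rightarrow> 'a) \<Rightarrow> real" and q :: "'a \<Rightarrow> real"
  assumes n_pos: "n \<ge> 1"
    and pi_meas: "\<pi> \<in> borel_measurable (PiM {..<n} (\<lambda>_. M))"
    and pi_nonneg: "\<forall>x\<in>space (PiM {..<n} (\<lambda>_. M)). \<pi> x \<ge> 0"
    and pi_dens: "(\<integral>\<^sup>+ x. ennreal (\<pi> x) \<partial>(PiM {..<n} (\<lambda>_. M))) = 1"
    and pi_perm: "perm_invariant n M \<pi>"
    and q_meas: "q \<in> borel_measurable M"
    and q_pos: "\<forall>y\<in>space M. q y > 0"
    and q_dens: "(\<integral>\<^sup>+ y. ennreal (q y) \<partial>M) = 1"
    and W_pos: "\<forall>y\<in>space M. \<forall>x\<in>space (PiM {..<n} (\<lambda>_. M)). Wsum n \<pi> q y x > 0"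
    and x_in: "x \<in> space (PiM {..<n} (\<lambda>_. M))"
  shows "A_SOMA n M \<pi> q x \<ge> A_RAN n M \<pi> q x"
proof -
  define f where
    "f = (\<lambda>y. q y * (\<Sum>i<n. wt n \<pi> q i y x / Wsum n \<pi> q y x * alpha_SOMA n \<pi> q i y x))"
  define g where "g = (\<lambda>y. q y * (\<Sum>i<n. 1 / real n * alpha_IMwG n \<pi> q i y x))"
  have q_nonneg: "\<forall>y\<in>space M. 0 \<le> q y"
    using q_pos by (simp add: less_imp_le)
  have ordered: "0 \<le> g y \<and> g y \<le> f y \<and> f y \<le> q y" if y: "y \<in> space M" for y
  proof -
    note acc = conditional_acceptance_ordered[OF pi_nonneg q_nonneg x_in y]
    have "0 \<le> q y"
      using q_nonneg y by blast
    with acc W_pos x_in y show ?thesis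
      unfolding f_def g_def by (auto intro: mult_left_mono mult_left_le)
  qed
  have "integrable M q"
    using q_meas q_nonneg q_dens by (intro integrableI_nn_integral_finite[where x=1]) auto
  moreover have "f \<in> borel_measurable M"
    unfolding f_def using borel_measurable_SOMA_integrand[OF pi_meas q_meas x_in] .
  moreover have "AE y in M. norm (f y) \<le> norm (q y)"
    using ordered by (intro AE_I2) force
  ultimately have "integrable M f"
    by (rule Bochner_Integration.integrable_bound)
  then have "(\<integral>y. g y \<partial>M) \<le> (\<integral>y. f y \<partial>M)"
    using ordered by (intro integral_mono') (blast, blast, meson order.trans)
  then show ?thesis
    unfolding A_SOMA_def A_RAN_def f_def g_def .
qed

end
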